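(* Let $(C,W)$ be a Harish-Chandra pair and $A=A(C,W)$. If there exists a non-zero $w\in W$ on which $C$ coacts trivially (i.e. $w\mapsto w\otimes1$ under $W\to W\otimes C$), then $A$ contains a non-zero odd primitive element. In particular this holds if $C$ is irreducible (coradical equal to $\Bbbk$) and $W\neq0$.
   Context: $\Bbbk$ is a field, $\operatorname{char}\Bbbk\ne2$. For a cocommutative Hopf algebra $J$ and right $J$-module $V$, a dual Harish-Chandra structure is a bilinear map $[\ ,\ ]:V\times V\to P(J)$ (primitives of $J$) with $\sum[u\triangleleft a_{(1)},v\triangleleft a_{(2)}]=\sum S(a_{(1)})[u,v]a_{(2)}$, $[u,v]=[v,u]$, $v\triangleleft[v,v]=0$. A Harish-Chandra pair $(C,W)$: $C$ a finitely generated commutative Hopf algebra, $W$ a finite-dimensional right $C$-comodule, $J=C^\circ$, $V=W^*$ with $\langle v\triangleleft a,w\rangle=\sum\langle v,w_{(0)}\rangle\langle a,w_{(1)}\rangle$, equipped with a bilinear map $V\times V\to P(J)$ making $(J,V)$ a dual Harish-Chandra pair. $A(C,W)$: let $\mathcal H(J,V)=J\ltimes T(V)$ be the smash product of $J$ with the tensor algebra $T(V)$ (elements of $V$ odd primitive, $J$ acting diagonally; product $(a\otimes x)(b\otimes y)=\sum ab_{(1)}\otimes(x\triangleleft b_{(2)})y$), a Hopf superalgebra, and $I(J,V)$ the ideal generated by $1\otimes(uv+vu)-[u,v]\otimes1$. Let $T_c(W)$ be the tensor coalgebra on odd $W$ with the (signed) shuffle product, $\mathcal A(C,W)=C\otimes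 T_c(W)$ with tensor product algebra and smash coproduct $\Delta(c\otimes z)=\sum(c_{(1)}\otimes(z_{(1)})_{(0)})\otimes((z_{(1)})_{(1)}c_{(2)}\otimes z_{(2)})$ (diagonal $C$-coaction on $T^n(W)$), and $\widehat{\mathcal A}(C,W)=\prod_nC\otimes T^n(W)$ its completion. Pair $\mathcal H(J,V)$ with $\widehat{\mathcal A}(C,W)$ by $\langle a\otimes x,c\otimes z\rangle=\langle a,c\rangle\langle x,z\rangle$ (degreewise canonical pairing of $T^n(V)$ with $T^n(W)$). $A(C,W)$ is the annihilator of $I(J,V)$ in $\widehat{\mathcal A}(C,W)$, a super-commutative Hopf superalgebra with induced structure. *)

theory Defs
  imports Complex_Main
begin

text \<open>Elements of a tensor product
C (x) C are represented by finite formal sums (Sweedler lists of pairs); two such sums are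
equal in C (x) C iff all functionals f (x) g agree on them (valid over a field).\<close>

definition lfun :: "('k::field \<Rightarrow> 'c::ab_group_add \<Rightarrow> 'c) \<Rightarrow> ('c \<Rightarrow> 'k) \<Rightarrow> bool" where
  "lfun sc f \<longleftrightarrow> Vector_Spaces.linear sc (*) f"

definition tev :: "('c \<Rightarrow> 'k::field) \<Rightarrow> ('c \<Rightarrow> 'k) \<Rightarrow> ('c \<times> 'c) list \<Rightarrow> 'k" where
  "tev f g t = sum_list (map (\<lambda>(x, y). f x * g y) t)"

definition teq :: "('k::field \<Rightarrow> 'c::ab_group_add \<Rightarrow> 'c) \<Rightarrow> ('c \<times> 'c) list \<Rightarrow> ('c \<times> 'c) list \<Rightarrow> bool" where
  "teq sc t u \<longleftrightarrow> (\<forall>f g. lfun sc f \<longrightarrow> lfun sc g \<longrightarrow> tev f g t = tev f g u)"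

definition comm_hopf_alg ::
  "('k::field \<Rightarrow> 'c::comm_ring_1 \<Rightarrow> 'c) \<Rightarrow> ('c \<Rightarrow> ('c \<times> 'c) list) \<Rightarrow> ('c \<Rightarrow> 'k) \<Rightarrow> ('c \<Rightarrow> 'c) \<Rightarrow> bool" where
  "comm_hopf_alg sc D e S \<longleftrightarrow>
     Vector_Spaces.vector_space sc \<and>
     (\<forall>a x y. sc a (x * y) = sc a x * y) \<and>
     (\<forall>f g. lfun sc f \<longrightarrow> lfun sc g \<longrightarrow> lfun sc (\<lambda>c. tev f g (D c))) \<and>
     (\<forall>x y. teq sc (D (x * y)) [(a * c, b * d). (a, b) \<leftarrow> D x, (c, d) \<leftarrow> D y]) \<and>
     teq sc (D 1) [(1, 1)] \<and>
     (\<forall>f g h c. lfun sc f \<longrightarrow> lfun sc g \<longrightarrow> lfun sc h \<longrightarrow>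
        sum_list (map (\<lambda>(x, y). tev f g (D x) * h y) (D c)) =
        sum_list (map (\<lambda>(x, y). f x * tev g h (D y)) (D c))) \<and>
     lfun sc e \<and> e 1 = 1 \<and> (\<forall>x y. e (x * y) = e x * e y) \<and>
     (\<forall>c. sum_list (map (\<lambda>(x, y). sc (e x) y) (D c)) = c) \<and>
     (\<forall>c. sum_list (map (\<lambda>(x, y). sc (e y) x) (D c)) = c) \<and>
     Vector_Spaces.linear sc sc S \<and>
     (\<forall>c. sum_list (map (\<lambda>(x, y). S x * y) (D c)) = sc (e c) 1) \<and>
     (\<forall>c. sum_list (map (\<lambda>(x, y). x * S y) (D c)) = sc (e c) 1)"

definition subalg :: "('k::field \<Rightarrow> 'c::comm_ring_1 \<Rightarrow> 'c) \<Rightarrow> 'c set \<Rightarrow> bool" where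
  "subalg sc B \<longleftrightarrow> 0 \<in> B \<and> 1 \<in> B \<and> (\<forall>x\<in>B. \<forall>y\<in>B. x + y \<in> B \<and> x * y \<in> B) \<and>
     (\<forall>a. \<forall>x\<in>B. sc a x \<in> B)"

definition fin_gen :: "('k::field \<Rightarrow> 'c::comm_ring_1 \<Rightarrow> 'c) \<Rightarrow> bool" where
  "fin_gen sc \<longleftrightarrow> (\<exists>G. finite G \<and> (\<forall>B. subalg sc B \<longrightarrow> G \<subseteq> B \<longrightarrow> B = UNIV))"

definition c_ideal :: "'c::comm_ring_1 set \<Rightarrow> bool" where
  "c_ideal I \<longleftrightarrow> 0 \<in> I \<and> (\<forall>x\<in>I. \<forall>y\<in>I. x + y \<in> I) \<and> (\<forall>x\<in>I. \<forall>c. c * x \<in> I)"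

text \<open>The finite (Sweedler) dual J = C\<degree>: functionals vanishing on a finite-codimensional ideal.\<close>
definition fin_dual :: "('k::field \<Rightarrow> 'c::comm_ring_1 \<Rightarrow> 'c) \<Rightarrow> ('c \<Rightarrow> 'k) set" where
  "fin_dual sc = {f. lfun sc f \<and> (\<exists>I. c_ideal I \<and>
      (\<exists>T. finite T \<and> (\<forall>c. \<exists>s\<in>module.span sc T. \<exists>i\<in>I. c = s + i)) \<and> (\<forall>x\<in>I. f x = 0))}"

text \<open>Primitive elements of J (the coproduct of J is dual to the product of C, unit of J is e).\<close>
definition prim_dual :: "('k::field \<Rightarrow> 'c::comm_ring_1 \<Rightarrow> 'c) \<Rightarrow> ('c \<Rightarrow> 'k) \<Rightarrow> ('c \<Rightarrow> 'k) set" where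
  "prim_dual sc e = {b \<in> fin_dual sc. \<forall>x y. b (x * y) = b x * e y + e x * b y}"

definition conv :: "('c \<Rightarrow> ('c \<times> 'c) list) \<Rightarrow> ('c \<Rightarrow> 'k::field) \<Rightarrow> ('c \<Rightarrow> 'k) \<Rightarrow> 'c \<Rightarrow> 'k" where
  "conv D a b = (\<lambda>c. tev a b (D c))"

text \<open>W is taken with a basis e_0..e_(m-1); the right coaction is
rho(e_j) = sum_i e_i (x) cf i j.  V = W* with the dual basis.\<close>
definition mat_comodule ::
  "('k::field \<Rightarrow> 'c::comm_ring_1 \<Rightarrow> 'c) \<Rightarrow> ('c \<Rightarrow> ('c \<times> 'c) list) \<Rightarrow> ('c \<Rightarrow> 'k) \<Rightarrow> nat \<Rightarrow> (nat \<Rightarrow> nat \<Rightarrow> 'c) \<Rightarrow> bool" where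
  "mat_comodule sc D e m cf \<longleftrightarrow>
     (\<forall>i<m. \<forall>j<m. teq sc (D (cf i j)) (map (\<lambda>k. (cf i k, cf k j)) [0..<m]) \<and>
        e (cf i j) = (if i = j then 1 else 0))"

text \<open>Dual Harish-Chandra structure, bracket on basis vectors br i j = [e^i, e^j]
(extended bilinearly).  Here e^i \<triangleleft> a = sum_j a(cf i j) e^j, and
(sum S(a1)[u,v]a2)(c) = sum a(S(c1) c3) [u,v](c2).\<close>
definition dual_HC ::
  "('k::field \<Rightarrow> 'c::comm_ring_1 \<Rightarrow> 'c) \<Rightarrow> ('c \<Rightarrow> ('c \<times> 'c) list) \<Rightarrow> ('c \<Rightarrow> 'k) \<Rightarrow> ('c \<Rightarrow> 'c) \<Rightarrow>
    nat \<Rightarrow> (nat \<Rightarrow> nat \<Rightarrow> 'c) \<Rightarrow> (nat \<Rightarrow> nat \<Rightarrow> 'c \<Rightarrow> 'k) \<Rightarrow> bool" where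
  "dual_HC sc D e S m cf br \<longleftrightarrow>
     (\<forall>i<m. \<forall>j<m. br i j \<in> prim_dual sc e) \<and>
     (\<forall>i<m. \<forall>j<m. br i j = br j i) \<and>
     (\<forall>lam :: nat \<Rightarrow> 'k. \<forall>l<m.
        (\<Sum>i<m. lam i * (\<Sum>j<m. \<Sum>k<m. lam j * lam k * br j k (cf i l))) = 0) \<and>
     (\<forall>a\<in>fin_dual sc. \<forall>i<m. \<forall>j<m. \<forall>c.
        (\<Sum>p<m. \<Sum>q<m. a (cf i p * cf j q) * br p q c) =
        sum_list (map (\<lambda>(x, y). sum_list (map (\<lambda>(y1, y2). a (S x * y2) * br i j y1) (D y))) (D c)))"

definition HC_pair ::
  "('k::field \<Rightarrow> 'c::comm_ring_1 \<Rightarrow> 'c) \<Rightarrow> ('c \<Rightarrow> ('c \<times> 'c) list) \<Rightarrow> ('c \<Rightarrow> 'k) \<Rightarrow> ('c \<Rightarrow> 'c) \<Rightarrow>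
    nat \<Rightarrow> (nat \<Rightarrow> nat \<Rightarrow> 'c) \<Rightarrow> (nat \<Rightarrow> nat \<Rightarrow> 'c \<Rightarrow> 'k) \<Rightarrow> bool" where
  "HC_pair sc D e S m cf br \<longleftrightarrow> comm_hopf_alg sc D e S \<and> fin_gen sc \<and>
     mat_comodule sc D e m cf \<and> dual_HC sc D e S m cf br"

definition cw :: "(nat \<Rightarrow> nat \<Rightarrow> 'c::comm_ring_1) \<Rightarrow> nat list \<Rightarrow> nat list \<Rightarrow> 'c" where
  "cw cf I J = prod_list (map (\<lambda>(i, j). cf i j) (zip I J))"

text \<open>H(J,V) = J \<ltimes> T(V): elements are formal sums of (a, I) meaning a (x) e^I (word in the
dual basis).  Smash product on basis elements:
(a (x) e^I)(b (x) e^K) = sum_{|J|=|I|} a\<cdot>b(_ \<cdot> cf_{I,J}) (x) e^J e^K.\<close>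
definition hmul1 :: "('c \<Rightarrow> ('c \<times> 'c) list) \<Rightarrow> nat \<Rightarrow> (nat \<Rightarrow> nat \<Rightarrow> 'c::comm_ring_1) \<Rightarrow>
    ('c \<Rightarrow> 'k::field) \<times> nat list \<Rightarrow> ('c \<Rightarrow> 'k) \<times> nat list \<Rightarrow> (('c \<Rightarrow> 'k) \<times> nat list) list" where
  "hmul1 D m cf p q = (case p of (a, I) \<Rightarrow> case q of (b, K) \<Rightarrow>
     map (\<lambda>J. (conv D a (\<lambda>x. b (x * cw cf I J)), J @ K)) (List.n_lists (length I) [0..<m]))"

definition hmul :: "('c \<Rightarrow> ('c \<times> 'c) list) \<Rightarrow> nat \<Rightarrow> (nat \<Rightarrow> nat \<Rightarrow> 'c::comm_ring_1) \<Rightarrow>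
    (('c \<Rightarrow> 'k::field) \<times> nat list) list \<Rightarrow> (('c \<Rightarrow> 'k) \<times> nat list) list \<Rightarrow> (('c \<Rightarrow> 'k) \<times> nat list) list" where
  "hmul D m cf xs ys = concat [hmul1 D m cf p q. p \<leftarrow> xs, q \<leftarrow> ys]"

text \<open>Generator 1 (x) (e^i e^j + e^j e^i) - [e^i,e^j] (x) 1 of I(J,V).\<close>
definition hgen :: "('c \<Rightarrow> 'k::field) \<Rightarrow> (nat \<Rightarrow> nat \<Rightarrow> 'c \<Rightarrow> 'k) \<Rightarrow> nat \<Rightarrow> nat \<Rightarrow> (('c \<Rightarrow> 'k) \<times> nat list) list" where
  "hgen e br i j = [(e, [i, j]), (e, [j, i]), (\<lambda>c. - br i j c, [])]"

text \<open>Elements of the completion \<Prod>_n C (x) T^n(W): F u is the C-coefficient of e_u.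
Pairing: <a (x) e^I, F> = a (F I).\<close>
definition hpair :: "(('c \<Rightarrow> 'k::field) \<times> nat list) list \<Rightarrow> (nat list \<Rightarrow> 'c) \<Rightarrow> 'k" where
  "hpair xs F = sum_list (map (\<lambda>(a, u). a (F u)) xs)"

text \<open>A(C,W): the annihilator of the two-sided ideal generated by the generators.\<close>
definition A_set ::
  "('k::field \<Rightarrow> 'c::comm_ring_1 \<Rightarrow> 'c) \<Rightarrow> ('c \<Rightarrow> ('c \<times> 'c) list) \<Rightarrow> ('c \<Rightarrow> 'k) \<Rightarrow>
    nat \<Rightarrow> (nat \<Rightarrow> nat \<Rightarrow> 'c) \<Rightarrow> (nat \<Rightarrow> nat \<Rightarrow> 'c \<Rightarrow> 'k) \<Rightarrow> (nat list \<Rightarrow> 'c) set" where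
  "A_set sc D e m cf br = {F. (\<forall>u. \<not> set u \<subseteq> {..<m} \<longrightarrow> F u = 0) \<and>
     (\<forall>a\<in>fin_dual sc. \<forall>b\<in>fin_dual sc. \<forall>I K. set I \<subseteq> {..<m} \<longrightarrow> set K \<subseteq> {..<m} \<longrightarrow>
        (\<forall>i<m. \<forall>j<m. hpair (hmul D m cf (hmul D m cf [(a, I)] (hgen e br i j)) [(b, K)]) F = 0))}"

text \<open>Coproduct of the completion, component in (C (x) e_I) (x) (C (x) e_Q):
sum_{|P|=|I|} sum (F(PQ))_1 (x) cf_{I,P} (F(PQ))_2.\<close>
definition Acop :: "('c \<Rightarrow> ('c \<times> 'c) list) \<Rightarrow> nat \<Rightarrow> (nat \<Rightarrow> nat \<Rightarrow> 'c::comm_ring_1) \<Rightarrow>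
    (nat list \<Rightarrow> 'c) \<Rightarrow> nat list \<Rightarrow> nat list \<Rightarrow> ('c \<times> 'c) list" where
  "Acop D m cf F I Q = concat (map (\<lambda>P. map (\<lambda>(x, y). (x, cw cf I P * y)) (D (F (P @ Q))))
      (List.n_lists (length I) [0..<m]))"

definition is_primitive ::
  "('k::field \<Rightarrow> 'c::comm_ring_1 \<Rightarrow> 'c) \<Rightarrow> ('c \<Rightarrow> ('c \<times> 'c) list) \<Rightarrow> nat \<Rightarrow> (nat \<Rightarrow> nat \<Rightarrow> 'c) \<Rightarrow>
    (nat list \<Rightarrow> 'c) \<Rightarrow> bool" where
  "is_primitive sc D m cf F \<longleftrightarrow> (\<forall>I Q. set I \<subseteq> {..<m} \<longrightarrow> set Q \<subseteq> {..<m} \<longrightarrow>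
     teq sc (Acop D m cf F I Q)
       ((if Q = [] then [(F I, 1)] else []) @ (if I = [] then [(1, F Q)] else [])))"

definition is_odd :: "(nat list \<Rightarrow> 'c::zero) \<Rightarrow> bool" where
  "is_odd F \<longleftrightarrow> (\<forall>u. even (length u) \<longrightarrow> F u = 0)"

definition has_nonzero_odd_primitive ::
  "('k::field \<Rightarrow> 'c::comm_ring_1 \<Rightarrow> 'c) \<Rightarrow> ('c \<Rightarrow> ('c \<times> 'c) list) \<Rightarrow> ('c \<Rightarrow> 'k) \<Rightarrow>
    nat \<Rightarrow> (nat \<Rightarrow> nat \<Rightarrow> 'c) \<Rightarrow> (nat \<Rightarrow> nat \<Rightarrow> 'c \<Rightarrow> 'k) \<Rightarrow> bool" where
  "has_nonzero_odd_primitive sc D e m cf br \<longleftrightarrow>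
     (\<exists>F\<in>A_set sc D e m cf br. F \<noteq> (\<lambda>_. 0) \<and> is_odd F \<and> is_primitive sc D m cf F)"

definition subcoalg :: "('k::field \<Rightarrow> 'c::comm_ring_1 \<Rightarrow> 'c) \<Rightarrow> ('c \<Rightarrow> ('c \<times> 'c) list) \<Rightarrow> 'c set \<Rightarrow> bool" where
  "subcoalg sc D B \<longleftrightarrow> module.subspace sc B \<and>
     (\<forall>d\<in>B. \<forall>f g. lfun sc f \<longrightarrow> lfun sc g \<longrightarrow> (\<forall>x\<in>B. f x = 0) \<longrightarrow>
        tev f g (D d) = 0 \<and> tev g f (D d) = 0)"

definition simple_subcoalg :: "('k::field \<Rightarrow> 'c::comm_ring_1 \<Rightarrow> 'c) \<Rightarrow> ('c \<Rightarrow> ('c \<times> 'c) list) \<Rightarrow> 'c set \<Rightarrow> bool" where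
  "simple_subcoalg sc D B \<longleftrightarrow> subcoalg sc D B \<and> B \<noteq> {0} \<and>
     (\<forall>E. subcoalg sc D E \<longrightarrow> E \<subseteq> B \<longrightarrow> E = {0} \<or> E = B)"

definition coradical :: "('k::field \<Rightarrow> 'c::comm_ring_1 \<Rightarrow> 'c) \<Rightarrow> ('c \<Rightarrow> ('c \<times> 'c) list) \<Rightarrow> 'c set" where
  "coradical sc D = module.span sc (\<Union>{B. simple_subcoalg sc D B})"

end

theory Submission
  imports Defs "HOL-Library.Function_Algebras"
begin

text \<open>A non-zero coinvariant vector \<open>w \<in> W\<close> yields the element \<open>1 \<otimes> w\<close> of
  \<open>C \<otimes> T\<^sup>1(W)\<close>. It is odd and, by coinvariance, primitive. It annihilates the ideal
  \<open>I(J,V)\<close> because it lives in degree one while a generator of \<open>I(J,V)\<close> has components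
  only in degrees two and zero, and the degree-zero component is a primitive functional,
  which vanishes at \<open>1\<close>.

  If \<open>C\<close> is irreducible and \<open>W \<noteq> 0\<close>, let \<open>V\<close> be a simple \<open>J\<close>-submodule of \<open>W\<close>. Its
  coefficient space is a non-zero finite-dimensional subcoalgebra of \<open>C\<close>, so it contains a
  simple subcoalgebra, which lies in the coradical \<open>\<Bbbk>1\<close>. Hence \<open>1\<close> is a coefficient of
  \<open>V\<close>, the counit \<open>f \<mapsto> f 1\<close> of \<open>J\<close> vanishes on the annihilator of \<open>V\<close>, and then \<open>V\<close>
  contains a vector on which \<open>J\<close> acts through the counit: a coinvariant vector.\<close>

section \<open>Linear functionals and formal tensors\<close>

lemma lfun_module_hom: "lfun sc f \<Longrightarrow> module_hom sc (*) f"
  by (simp add: lfun_def module_hom_iff_linear)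

lemma lfun_add: "lfun sc f \<Longrightarrow> f (x + y) = f x + f y"
  by (simp add: lfun_def Vector_Spaces.linear_iff)

lemma lfun_scale: "lfun sc f \<Longrightarrow> f (sc a x) = a * f x"
  by (simp add: lfun_def Vector_Spaces.linear_iff)

lemma lfun_zero: "lfun sc f \<Longrightarrow> f 0 = 0"
  by (drule lfun_module_hom, rule module_hom.zero)

lemma lfun_sum: "lfun sc f \<Longrightarrow> f (sum g A) = (\<Sum>a\<in>A. f (g a))"
  by (drule lfun_module_hom, rule module_hom.sum)

lemma lfun_diff: "lfun sc f \<Longrightarrow> f (x - y) = f x - f y"
  by (drule lfun_module_hom, rule module_hom.diff)

lemma vector_space_field_mult: "Vector_Spaces.vector_space ((*) :: 'k::field \<Rightarrow> _)"
  by unfold_locales (auto simp: algebra_simps)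

lemma lfunI:
  "Vector_Spaces.vector_space sc \<Longrightarrow> (\<And>x y. f (x + y) = f x + f y) \<Longrightarrow>
    (\<And>a x. f (sc a x) = a * f x) \<Longrightarrow> lfun sc f"
  by (simp add: lfun_def Vector_Spaces.linear_iff vector_space_field_mult)

lemma ex_lfun_nonzero:
  assumes "Vector_Spaces.vector_space sc" and "x \<noteq> 0"
  shows "\<exists>g. lfun sc g \<and> g x \<noteq> 0"
proof -
  interpret vector_space_pair sc "(*)"
    using assms(1) vector_space_field_mult by (simp add: vector_space_pair_def)
  have "vs1.independent {x}" using assms(2) by simp
  then obtain g where "Vector_Spaces.linear sc (*) g" "g x = 1"
    using linear_independent_extend[of "{x}" "\<lambda>_. 1"] by auto
  then show ?thesis by (auto simp: lfun_def)
qed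

lemma teqD: "teq sc t u \<Longrightarrow> lfun sc f \<Longrightarrow> lfun sc g \<Longrightarrow> tev f g t = tev f g u"
  by (simp add: teq_def)

lemma tev_Nil [simp]: "tev f g [] = 0"
  by (simp add: tev_def)

lemma tev_Cons [simp]: "tev f g (p # t) = f (fst p) * g (snd p) + tev f g t"
  by (simp add: tev_def split_def)

lemma tev_append [simp]: "tev f g (t @ u) = tev f g t + tev f g u"
  by (simp add: tev_def)

lemma tev_concat: "tev f g (concat ts) = sum_list (map (tev f g) ts)"
  by (induct ts) auto

lemma tev_map_mult_right: "tev f g (map (\<lambda>(x, y). (x, c * y)) t) = tev f (\<lambda>y. g (c * y)) t"
  by (induct t) auto

lemma hpair_Nil [simp]: "hpair [] F = 0"
  by (simp add: hpair_def)

lemma hpair_Cons [simp]: "hpair (p # xs) F = fst p (F (snd p)) + hpair xs F"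
  by (simp add: hpair_def split_def)

lemma hpair_append [simp]: "hpair (xs @ ys) F = hpair xs F + hpair ys F"
  by (simp add: hpair_def)

lemma hpair_concat: "hpair (concat xss) F = sum_list (map (\<lambda>xs. hpair xs F) xss)"
  by (induct xss) (auto simp: hpair_def)

lemma sum_fun_apply: "(sum f A) x = (\<Sum>a\<in>A. f a x)"
  by (induct A rule: infinite_finite_induct) auto

lemma sum_list_map_upt: "sum_list (map f [0..<m]) = (\<Sum>q<m. f q)"
  by (simp add: interv_sum_list_conv_sum_set_nat atLeast0LessThan)

lemma sum_list_map_eq_0:
  "(\<And>x. x \<in> set xs \<Longrightarrow> f x = 0) \<Longrightarrow> sum_list (map f xs) = (0::'a::monoid_add)"
  by (induct xs) auto

section \<open>Finite-dimensional subspaces\<close>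

lemma (in vector_space) subspace_superset_if_dim_le:
  assumes U: "subspace U" and UW: "U \<subseteq> W" and W: "W \<subseteq> span F" "finite F"
    and dim: "dim W \<le> dim U"
  shows "W \<subseteq> U"
proof
  fix v assume vW: "v \<in> W"
  show "v \<in> U"
  proof (rule ccontr)
    assume vU: "v \<notin> U"
    obtain Bu where Bu: "Bu \<subseteq> U" "independent Bu" "U \<subseteq> span Bu" "card Bu = dim U"
      by (rule basis_exists)
    obtain Bw where Bw: "Bw \<subseteq> W" "independent Bw" "W \<subseteq> span Bw" "card Bw = dim W"
      by (rule basis_exists)
    have "Bw \<subseteq> span F" using Bw(1) W(1) by (rule order_trans)
    with independent_span_bound[OF W(2) Bw(2)] have "finite Bw" by simp
    have "span Bu \<subseteq> U" using Bu(1) U by (rule span_minimal)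
    then have "independent (insert v Bu)"
      using vU Bu(2) by (intro independent_insertI) blast
    moreover have "insert v Bu \<subseteq> span Bw" using Bu(1) UW Bw(3) vW by blast
    ultimately have "finite (insert v Bu) \<and> card (insert v Bu) \<le> card Bw"
      by (rule independent_span_bound[OF \<open>finite Bw\<close>])
    moreover have "v \<notin> Bu" using Bu(1) vU by blast
    ultimately show False using Bu(4) Bw(4) dim by (auto simp: card_insert_disjoint)
  qed
qed

lemma (in vector_space) ex_minimal_subspace:
  assumes F: "finite F" and Q0: "Q U0" and Q: "\<And>U. Q U \<Longrightarrow> subspace U \<and> U \<subseteq> span F"
  shows "\<exists>U. Q U \<and> (\<forall>U'. Q U' \<longrightarrow> U' \<subseteq> U \<longrightarrow> U' = U)"
proof -
  define P where "P n \<longleftrightarrow> (\<exists>U. Q U \<and> dim U = n)" for n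
  have "P (dim U0)" using Q0 by (auto simp: P_def)
  then have "P (Least P)" by (rule LeastI)
  then obtain U where U: "Q U" "dim U = Least P" by (auto simp: P_def)
  have "U' = U" if U': "Q U'" "U' \<subseteq> U" for U'
  proof
    have "P (dim U')" using U'(1) by (auto simp: P_def)
    then have "dim U \<le> dim U'" unfolding U(2) by (rule Least_le)
    moreover have "subspace U'" "U \<subseteq> span F" using Q[OF U'(1)] Q[OF U(1)] by simp_all
    ultimately show "U \<subseteq> U'" using subspace_superset_if_dim_le U'(2) F by blast
  qed (fact U'(2))
  then show ?thesis using U(1) by blast
qed

lemma ex_subset_insert_fails:
  assumes "finite A" "P {}" "\<not> P A"
  shows "\<exists>Y\<subseteq>A. \<exists>x\<in>A. P Y \<and> \<not> P (insert x Y)"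
  using assms
proof (induction A rule: finite_induct)
  case (insert a A)
  show ?case
  proof (cases "P A")
    case True
    then show ?thesis using insert.prems by blast
  next
    case False
    then show ?thesis using insert.IH[OF insert.prems(1) False] by blast
  qed
qed simp

definition vscale :: "'k::field \<Rightarrow> (nat \<Rightarrow> 'k) \<Rightarrow> nat \<Rightarrow> 'k" where
  "vscale a v = (\<lambda>i. a * v i)"

lemma vscale_apply [simp]: "vscale a v i = a * v i"
  by (simp add: vscale_def)

interpretation Vec: vector_space "vscale :: 'k::field \<Rightarrow> _"
  by unfold_locales (auto simp: vscale_def algebra_simps)

section \<open>A commutative Hopf algebra with a finite-dimensional comodule\<close>

locale hopf_comodule =
  fixes sc :: "'k::field \<Rightarrow> 'c::comm_ring_1 \<Rightarrow> 'c"
    and D :: "'c \<Rightarrow> ('c \<times> 'c) list" and e :: "'c \<Rightarrow> 'k" and S :: "'c \<Rightarrow> 'c"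
    and m :: nat and cf :: "nat \<Rightarrow> nat \<Rightarrow> 'c"
  assumes hopf: "comm_hopf_alg sc D e S" and comodule: "mat_comodule sc D e m cf"
begin

sublocale C: vector_space sc
  using hopf by (simp add: comm_hopf_alg_def)

lemma scale_mult_left: "sc a (x * y) = sc a x * y"
  using hopf by (simp add: comm_hopf_alg_def)

lemma lfun_counit: "lfun sc e"
  using hopf by (simp add: comm_hopf_alg_def)

lemma counit_one: "e 1 = 1"
  using hopf by (simp add: comm_hopf_alg_def)

lemma counit_cf: "i < m \<Longrightarrow> j < m \<Longrightarrow> e (cf i j) = (if i = j then 1 else 0)"
  using comodule by (simp add: mat_comodule_def)

lemma lfun_tev_comult: "lfun sc f \<Longrightarrow> lfun sc g \<Longrightarrow> lfun sc (\<lambda>c. tev f g (D c))"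
  using hopf by (simp add: comm_hopf_alg_def)

lemma lfun_conv: "lfun sc f \<Longrightarrow> lfun sc g \<Longrightarrow> lfun sc (conv D f g)"
  by (simp add: conv_def lfun_tev_comult)

lemma tev_comult_one: "lfun sc f \<Longrightarrow> lfun sc g \<Longrightarrow> tev f g (D 1) = f 1 * g 1"
  using hopf teqD[of sc "D 1" "[(1, 1)]" f g] by (simp add: comm_hopf_alg_def)

lemma conv_one: "lfun sc f \<Longrightarrow> lfun sc g \<Longrightarrow> conv D f g 1 = f 1 * g 1"
  by (simp add: conv_def tev_comult_one)

lemma tev_comult_scale_one:
  "lfun sc f \<Longrightarrow> lfun sc g \<Longrightarrow> tev f g (D (sc a 1)) = a * (f 1 * g 1)"
  using lfun_scale[OF lfun_tev_comult, of f g a 1] by (simp add: tev_comult_one)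

lemma tev_comult_zero: "lfun sc f \<Longrightarrow> lfun sc g \<Longrightarrow> tev f g (D 0) = 0"
  using lfun_zero[OF lfun_tev_comult] by blast

lemma tev_comult_cf:
  assumes "i < m" "j < m" "lfun sc f" "lfun sc g"
  shows "tev f g (D (cf i j)) = (\<Sum>k<m. f (cf i k) * g (cf k j))"
proof -
  have "tev f g (D (cf i j)) = tev f g (map (\<lambda>k. (cf i k, cf k j)) [0..<m])"
    using comodule assms by (intro teqD) (auto simp: mat_comodule_def)
  also have "\<dots> = (\<Sum>k<m. f (cf i k) * g (cf k j))"
    by (simp add: tev_def comp_def sum_list_map_upt)
  finally show ?thesis .
qed

lemma lfun_add_fun: "lfun sc f \<Longrightarrow> lfun sc g \<Longrightarrow> lfun sc (\<lambda>c. f c + g c)"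
  by (auto intro!: lfunI simp: lfun_add lfun_scale algebra_simps C.vector_space_axioms)

lemma lfun_scale_fun: "lfun sc f \<Longrightarrow> lfun sc (\<lambda>c. a * f c)"
  by (auto intro!: lfunI simp: lfun_add lfun_scale algebra_simps C.vector_space_axioms)

lemma lfun_zero_fun: "lfun sc (\<lambda>c. 0)"
  by (auto intro!: lfunI simp: C.vector_space_axioms)

lemma lfun_mult_right: "lfun sc f \<Longrightarrow> lfun sc (\<lambda>x. f (x * y))"
  by (auto intro!: lfunI simp: lfun_add lfun_scale distrib_right scale_mult_left[symmetric]
      C.vector_space_axioms)

lemma lfun_mult_left: "lfun sc f \<Longrightarrow> lfun sc (\<lambda>x. f (y * x))"
  using lfun_mult_right[of f y] by (simp add: mult.commute)

lemma lfun_kernel_subspace: "lfun sc f \<Longrightarrow> C.subspace {x. f x = 0}"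
  by (rule C.subspaceI) (auto simp: lfun_zero lfun_add lfun_scale)

lemma lfun_eq_0_on_span:
  "lfun sc f \<Longrightarrow> (\<And>x. x \<in> G \<Longrightarrow> f x = 0) \<Longrightarrow> x \<in> C.span G \<Longrightarrow> f x = 0"
  using C.span_minimal[OF _ lfun_kernel_subspace, of G f] by blast

lemma fin_dual_lfun: "a \<in> fin_dual sc \<Longrightarrow> lfun sc a"
  by (simp add: fin_dual_def)

lemma prim_dual_lfun: "b \<in> prim_dual sc e \<Longrightarrow> lfun sc b"
  by (simp add: prim_dual_def fin_dual_def)

lemma prim_dual_one: "b \<in> prim_dual sc e \<Longrightarrow> b 1 = 0"
proof -
  assume "b \<in> prim_dual sc e"
  then have "b (1 * 1) = b 1 * e 1 + e 1 * b 1" unfolding prim_dual_def by blast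
  then show "b 1 = 0" by (metis counit_one mult_1 mult_1_right add_cancel_right_right)
qed

definition coinvariant :: "(nat \<Rightarrow> 'k) \<Rightarrow> bool" where
  "coinvariant w \<longleftrightarrow> (\<forall>i<m. (\<Sum>j<m. sc (w j) (cf i j)) = sc (w i) 1)"

section \<open>The odd primitive element \<open>1 \<otimes> w\<close>\<close>

text \<open>The element \<open>1 \<otimes> w\<close> of \<open>C \<otimes> T\<^sup>1(W)\<close>, for \<open>w\<close> given by its coordinates.\<close>
definition one_tensor :: "(nat \<Rightarrow> 'k) \<Rightarrow> nat list \<Rightarrow> 'c" where
  "one_tensor w u = (if length u = 1 \<and> hd u < m then sc (w (hd u)) 1 else 0)"

lemma tev_comult_one_tensor:
  "lfun sc f \<Longrightarrow> lfun sc g \<Longrightarrow> tev f g (D (one_tensor w u)) =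
    (if length u = 1 \<and> hd u < m then w (hd u) * (f 1 * g 1) else 0)"
  by (simp add: one_tensor_def tev_comult_scale_one tev_comult_zero)

lemma hpair_hmul1_one_tensor:
  assumes "lfun sc c" "lfun sc b"
  shows "hpair (hmul1 D m cf (c, L) (b, K)) (one_tensor w) =
    sum_list (map (\<lambda>J. if length J + length K = 1 \<and> hd (J @ K) < m
      then w (hd (J @ K)) * (c 1 * b (1 * cw cf L J)) else 0) (List.n_lists (length L) [0..<m]))"
  using assms
  by (simp add: hmul1_def hpair_def comp_def conv_def tev_comult_one_tensor lfun_mult_right)

lemma hpair_hmul1_one_tensor_eq_0:
  "lfun sc c \<Longrightarrow> lfun sc b \<Longrightarrow> length L + length K \<noteq> 1 \<Longrightarrow>
    hpair (hmul1 D m cf (c, L) (b, K)) (one_tensor w) = 0"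
  by (simp add: hpair_hmul1_one_tensor, rule sum_list_map_eq_0, auto dest: length_n_lists_elem)

lemma hpair_hmul1_one_tensor_single_Nil:
  "lfun sc c \<Longrightarrow> lfun sc b \<Longrightarrow>
    hpair (hmul1 D m cf (c, [l]) (b, [])) (one_tensor w) = (\<Sum>q<m. w q * (c 1 * b (cf l q)))"
  by (simp add: hpair_hmul1_one_tensor cw_def comp_def sum_list_map_upt)

lemma hmul1_lfun_length:
  "p \<in> set (hmul1 D m cf (a, I) (b, K)) \<Longrightarrow> lfun sc a \<Longrightarrow> lfun sc b \<Longrightarrow>
    lfun sc (fst p) \<and> length (snd p) = length I + length K"
  by (auto simp: hmul1_def conv_def lfun_tev_comult lfun_mult_right dest: length_n_lists_elem)

abbreviation pair_product_one_tensor :: "('c \<Rightarrow> 'k) \<times> nat list \<Rightarrow> ('c \<Rightarrow> 'k) \<times> nat list \<Rightarrow>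
    ('c \<Rightarrow> 'k) \<times> nat list \<Rightarrow> (nat \<Rightarrow> 'k) \<Rightarrow> 'k" where
  "pair_product_one_tensor x y z w \<equiv>
     sum_list (map (\<lambda>p. hpair (hmul1 D m cf p z) (one_tensor w)) (hmul1 D m cf x y))"

lemma pair_product_one_tensor_degree_ne_1:
  assumes "lfun sc a" "lfun sc c" "lfun sc b" "length I + length L + length K \<noteq> 1"
  shows "pair_product_one_tensor (a, I) (c, L) (b, K) w = 0"
proof (rule sum_list_map_eq_0)
  fix p assume "p \<in> set (hmul1 D m cf (a, I) (c, L))"
  then have "lfun sc (fst p)" "length (snd p) + length K \<noteq> 1"
    using hmul1_lfun_length assms by auto
  then show "hpair (hmul1 D m cf p (b, K)) (one_tensor w) = 0"
    using hpair_hmul1_one_tensor_eq_0 assms(3) by (cases p) auto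
qed

text \<open>Only \<open>|I| + |K| = 1\<close> contributes, and there coinvariance of \<open>w\<close> turns the pairing
  into a multiple of \<open>\<beta> 1\<close>.\<close>
lemma pair_product_one_tensor_degree_0:
  assumes w: "coinvariant w" and a: "lfun sc a" and b: "lfun sc b"
    and \<beta>: "lfun sc \<beta>" "\<beta> 1 = 0" and I: "set I \<subseteq> {..<m}"
  shows "pair_product_one_tensor (a, I) (\<beta>, []) (b, K) w = 0"
proof -
  consider "length I + length K \<noteq> 1" | "I = []" "length K = 1" | "length I = 1" "K = []"
    by (cases I) auto
  then show ?thesis
  proof cases
    case 1
    then show ?thesis using pair_product_one_tensor_degree_ne_1 a \<beta>(1) b by simp
  next
    case 2
    then obtain k where K: "K = [k]" by (cases K) auto
    have "hmul1 D m cf (a, I) (\<beta>, []) = [(conv D a \<beta>, [])]"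
      by (simp add: hmul1_def 2 cw_def)
    moreover have "conv D a \<beta> 1 = 0"
      using \<beta> by (simp add: conv_one a)
    ultimately show ?thesis
      using lfun_conv[OF a \<beta>(1)] b by (simp add: K hpair_hmul1_one_tensor cw_def)
  next
    case 3
    then obtain p where I': "I = [p]" by (cases I) auto
    have p: "p < m" using I I' by simp
    have lc: "lfun sc (conv D a (\<lambda>x. \<beta> (x * cf p q)))" for q
      using lfun_conv a lfun_mult_right[OF \<beta>(1)] by simp
    have "hmul1 D m cf (a, I) (\<beta>, []) = map (\<lambda>q. (conv D a (\<lambda>x. \<beta> (x * cf p q)), [q])) [0..<m]"
      by (simp add: hmul1_def I' cw_def comp_def)
    then have "pair_product_one_tensor (a, I) (\<beta>, []) (b, K) w =
        (\<Sum>q<m. \<Sum>r<m. w r * (a 1 * \<beta> (cf p q) * b (cf q r)))"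
      using lc b lfun_mult_right[OF \<beta>(1)]
      by (simp add: 3 comp_def sum_list_map_upt hpair_hmul1_one_tensor_single_Nil conv_one a)
    also have "\<dots> = (\<Sum>q<m. a 1 * \<beta> (cf p q) * b (\<Sum>r<m. sc (w r) (cf q r)))"
      by (simp add: lfun_sum[OF b] lfun_scale[OF b] sum_distrib_left mult.commute mult.left_commute)
    also have "\<dots> = a 1 * b 1 * \<beta> (\<Sum>q<m. sc (w q) (cf p q))"
      using w by (simp add: coinvariant_def lfun_scale[OF b] lfun_sum[OF \<beta>(1)] lfun_scale[OF \<beta>(1)]
          sum_distrib_left algebra_simps)
    also have "\<dots> = 0"
      using w p \<beta> by (simp add: coinvariant_def lfun_scale)
    finally show ?thesis .
  qed
qed

lemma one_tensor_in_A_set: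
  assumes br: "\<forall>i<m. \<forall>j<m. br i j \<in> prim_dual sc e" and w: "coinvariant w"
  shows "one_tensor w \<in> A_set sc D e m cf br"
  unfolding A_set_def
proof (intro CollectI conjI allI ballI impI)
  fix u :: "nat list" assume "\<not> set u \<subseteq> {..<m}"
  then show "one_tensor w u = 0" by (cases u) (auto simp: one_tensor_def)
next
  fix a b I K i j
  assume "a \<in> fin_dual sc" "b \<in> fin_dual sc" "set I \<subseteq> {..<m}" "i < m" "j < m"
  then have a: "lfun sc a" and b: "lfun sc b" and I: "set I \<subseteq> {..<m}"
    and "lfun sc (br i j)" "br i j 1 = 0"
    using br by (auto simp: fin_dual_lfun prim_dual_one prim_dual_lfun)
  then have \<beta>: "lfun sc (\<lambda>c. - br i j c)" "- br i j 1 = 0"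
    using lfun_scale_fun[of "br i j" "- 1"] by simp_all
  have "hpair (hmul D m cf (hmul D m cf [(a, I)] (hgen e br i j)) [(b, K)]) (one_tensor w) =
      pair_product_one_tensor (a, I) (e, [i, j]) (b, K) w
      + pair_product_one_tensor (a, I) (e, [j, i]) (b, K) w
      + pair_product_one_tensor (a, I) (\<lambda>c. - br i j c, []) (b, K) w"
    by (simp add: hmul_def hgen_def hpair_concat comp_def)
  also have "\<dots> = 0"
    using pair_product_one_tensor_degree_ne_1[OF a lfun_counit b]
      pair_product_one_tensor_degree_0[OF w a b \<beta> I]
    by simp
  finally show
    "hpair (hmul D m cf (hmul D m cf [(a, I)] (hgen e br i j)) [(b, K)]) (one_tensor w) = 0" .
qed

lemma tev_Acop_one_tensor:
  assumes "lfun sc f" "lfun sc g"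
  shows "tev f g (Acop D m cf (one_tensor w) I Q) =
    sum_list (map (\<lambda>P. if length P + length Q = 1 \<and> hd (P @ Q) < m
      then w (hd (P @ Q)) * (f 1 * g (cw cf I P)) else 0) (List.n_lists (length I) [0..<m]))"
  using assms lfun_mult_left[OF assms(2)]
  by (simp add: Acop_def tev_concat comp_def tev_map_mult_right tev_comult_one_tensor cong: if_cong)

lemma one_tensor_primitive:
  assumes w: "coinvariant w"
  shows "is_primitive sc D m cf (one_tensor w)"
  unfolding is_primitive_def teq_def
proof (intro allI impI)
  fix I Q f g
  assume I: "set I \<subseteq> {..<m}" and Q: "set Q \<subseteq> {..<m}" and f: "lfun sc f" and g: "lfun sc g"
  consider "length I + length Q \<noteq> 1" | "I = []" "length Q = 1" | "length I = 1" "Q = []"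
    by (cases I) auto
  then show "tev f g (Acop D m cf (one_tensor w) I Q) =
      tev f g ((if Q = [] then [(one_tensor w I, 1)] else []) @
               (if I = [] then [(1, one_tensor w Q)] else []))"
  proof cases
    case 1
    then have "tev f g (Acop D m cf (one_tensor w) I Q) = 0"
      by (simp add: tev_Acop_one_tensor f g, intro sum_list_map_eq_0)
        (force dest: length_n_lists_elem)
    with 1 show ?thesis by (auto simp: one_tensor_def lfun_zero[OF f] lfun_zero[OF g])
  next
    case 2
    then obtain q where "Q = [q]" by (cases Q) auto
    with 2 Q show ?thesis by (simp add: tev_Acop_one_tensor f g cw_def one_tensor_def lfun_scale)
  next
    case 3
    then obtain p where I': "I = [p]" by (cases I) auto
    have p: "p < m" using I I' by simp
    have "tev f g (Acop D m cf (one_tensor w) I Q) = (\<Sum>q<m. w q * (f 1 * g (cf p q)))"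
      by (simp add: tev_Acop_one_tensor f g 3 I' cw_def comp_def sum_list_map_upt)
    also have "\<dots> = f 1 * g (\<Sum>q<m. sc (w q) (cf p q))"
      by (simp add: lfun_sum[OF g] lfun_scale[OF g] sum_distrib_left mult.left_commute)
    also have "\<dots> = f 1 * g (sc (w p) 1)"
      using w p by (simp add: coinvariant_def)
    finally show ?thesis using p by (simp add: I' 3 one_tensor_def lfun_scale f g)
  qed
qed

lemma coinvariant_imp_odd_primitive:
  assumes br: "\<forall>i<m. \<forall>j<m. br i j \<in> prim_dual sc e"
    and w: "coinvariant w" and nz: "\<exists>j<m. w j \<noteq> 0"
  shows "has_nonzero_odd_primitive sc D e m cf br"
  unfolding has_nonzero_odd_primitive_def
proof (intro bexI conjI)
  show "one_tensor w \<in> A_set sc D e m cf br" using br w by (rule one_tensor_in_A_set)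
  show "is_primitive sc D m cf (one_tensor w)" using w by (rule one_tensor_primitive)
  show "is_odd (one_tensor w)" by (auto simp: is_odd_def one_tensor_def)
  obtain j where "j < m" "w j \<noteq> 0" using nz by blast
  then have "one_tensor w [j] \<noteq> 0" by (simp add: one_tensor_def)
  then show "one_tensor w \<noteq> (\<lambda>_. 0)" by metis
qed

section \<open>\<open>W\<close> as a module over the dual algebra \<open>J\<close>\<close>

text \<open>The action of \<open>J\<close> on \<open>W\<close> induced by the coaction; a vector of \<open>W\<close> is represented
  by its coordinate function, which vanishes from \<open>m\<close> on.\<close>
definition act :: "('c \<Rightarrow> 'k) \<Rightarrow> (nat \<Rightarrow> 'k) \<Rightarrow> nat \<Rightarrow> 'k" where
  "act g v = (\<lambda>i. if i < m then (\<Sum>j<m. g (cf i j) * v j) else 0)"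

definition W_vecs :: "(nat \<Rightarrow> 'k) set" where
  "W_vecs = {v. \<forall>i\<ge>m. v i = 0}"

definition submodule :: "(nat \<Rightarrow> 'k) set \<Rightarrow> bool" where
  "submodule U \<longleftrightarrow>
     Vec.subspace U \<and> U \<subseteq> W_vecs \<and> (\<forall>g v. lfun sc g \<longrightarrow> v \<in> U \<longrightarrow> act g v \<in> U)"

definition simple_submodule :: "(nat \<Rightarrow> 'k) set \<Rightarrow> bool" where
  "simple_submodule U \<longleftrightarrow> submodule U \<and> U \<noteq> {0} \<and>
     (\<forall>U'. submodule U' \<longrightarrow> U' \<subseteq> U \<longrightarrow> U' \<noteq> {0} \<longrightarrow> U' = U)"

definition left_ideal :: "(('c \<Rightarrow> 'k) \<Rightarrow> bool) \<Rightarrow> bool" where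
  "left_ideal L \<longleftrightarrow> (\<forall>f. L f \<longrightarrow> lfun sc f) \<and> L (\<lambda>c. 0) \<and>
     (\<forall>f g. L f \<longrightarrow> L g \<longrightarrow> L (\<lambda>c. f c + g c)) \<and> (\<forall>a f. L f \<longrightarrow> L (\<lambda>c. a * f c)) \<and>
     (\<forall>h f. lfun sc h \<longrightarrow> L f \<longrightarrow> L (conv D h f))"

lemma act_in_W_vecs: "act g v \<in> W_vecs"
  by (simp add: act_def W_vecs_def)

lemma act_add: "act g (u + v) = act g u + act g v"
  by (rule ext) (simp add: act_def distrib_left sum.distrib)

lemma act_vscale: "act g (vscale a v) = vscale a (act g v)"
  by (rule ext) (simp add: act_def sum_distrib_left mult.left_commute)

lemma act_zero: "act g 0 = 0"
  by (rule ext) (simp add: act_def)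

lemma act_add_fun: "act (\<lambda>c. f c + g c) v = act f v + act g v"
  by (rule ext) (simp add: act_def distrib_right sum.distrib)

lemma act_scale_fun: "act (\<lambda>c. a * f c) v = vscale a (act f v)"
  by (rule ext) (simp add: act_def sum_distrib_left mult.assoc)

lemma act_zero_fun: "act (\<lambda>c. 0) v = 0"
  by (rule ext) (simp add: act_def)

lemma act_conv:
  assumes f: "lfun sc f" and g: "lfun sc g"
  shows "act (conv D f g) v = act f (act g v)"
proof (rule ext)
  fix i
  show "act (conv D f g) v i = act f (act g v) i"
  proof (cases "i < m")
    case True
    then have "act (conv D f g) v i = (\<Sum>j<m. \<Sum>k<m. f (cf i k) * (g (cf k j) * v j))"
      by (simp add: act_def conv_def tev_comult_cf f g sum_distrib_right mult.assoc)
    also have "\<dots> = (\<Sum>k<m. f (cf i k) * (\<Sum>j<m. g (cf k j) * v j))"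
      by (subst sum.swap) (simp add: sum_distrib_left)
    also have "\<dots> = act f (act g v) i"
      using True by (simp add: act_def)
    finally show ?thesis .
  qed (simp add: act_def)
qed

lemma act_counit:
  assumes "v \<in> W_vecs"
  shows "act e v = v"
proof (rule ext)
  fix i
  show "act e v i = v i"
  proof (cases "i < m")
    case True
    then have "act e v i = (\<Sum>j<m. (if i = j then 1 else 0) * v j)"
      by (simp add: act_def counit_cf)
    also have "\<dots> = (\<Sum>j<m. if i = j then v j else 0)"
      by (rule sum.cong) simp_all
    finally show ?thesis using True by simp
  qed (use assms in \<open>simp add: act_def W_vecs_def\<close>)
qed

lemma W_vecs_nonzero_coord:
  assumes "v \<in> W_vecs" "v \<noteq> 0"
  shows "\<exists>i<m. v i \<noteq> 0"
proof -
  obtain i where "v i \<noteq> 0" using assms(2) by (auto simp: fun_eq_iff)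
  moreover have "i < m"
  proof (rule ccontr)
    assume "\<not> i < m"
    then have "v i = 0" using assms(1) by (simp add: W_vecs_def)
    then show False using \<open>v i \<noteq> 0\<close> by simp
  qed
  ultimately show ?thesis by blast
qed

lemma submodule_W_vecs: "submodule W_vecs"
  unfolding submodule_def using act_in_W_vecs
  by (auto intro!: Vec.subspaceI simp: W_vecs_def)

lemma W_vecs_finite_span: "\<exists>F. finite F \<and> W_vecs \<subseteq> Vec.span F"
proof (intro exI conjI)
  define \<delta> where "\<delta> i = (\<lambda>j. if j = i then 1 else 0 :: 'k)" for i :: nat
  show "finite (\<delta> ` {..<m})" by simp
  show "W_vecs \<subseteq> Vec.span (\<delta> ` {..<m})"
  proof
    fix v assume v: "v \<in> W_vecs"
    have "v = (\<Sum>i<m. vscale (v i) (\<delta> i))"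
      using v by (auto simp: fun_eq_iff sum_fun_apply \<delta>_def W_vecs_def if_distrib sum.delta
          cong: if_cong)
    also have "\<dots> \<in> Vec.span (\<delta> ` {..<m})"
      by (intro Vec.span_sum Vec.span_scale Vec.span_base) auto
    finally show "v \<in> Vec.span (\<delta> ` {..<m})" .
  qed
qed

lemma ex_simple_submodule:
  assumes "m > 0"
  shows "\<exists>V. simple_submodule V"
proof -
  obtain F where F: "finite F" "W_vecs \<subseteq> Vec.span F" using W_vecs_finite_span by blast
  define v :: "nat \<Rightarrow> 'k" where "v j = (if j = 0 then 1 else 0)" for j
  have "v \<in> W_vecs" using assms by (simp add: v_def W_vecs_def)
  moreover have "v \<noteq> 0" by (metis v_def zero_fun_def zero_neq_one)
  ultimately have "W_vecs \<noteq> {0}" by blast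
  then have "\<exists>V. (submodule V \<and> V \<noteq> {0}) \<and>
      (\<forall>U. submodule U \<and> U \<noteq> {0} \<longrightarrow> U \<subseteq> V \<longrightarrow> U = V)"
    using submodule_W_vecs F
    by (intro Vec.ex_minimal_subspace[of F _ W_vecs]) (auto simp: submodule_def)
  then show ?thesis by (auto simp: simple_submodule_def)
qed

lemma submodule_orbit:
  assumes L: "left_ideal L"
  shows "submodule {act f x | f. L f}"
  unfolding submodule_def
proof (intro conjI allI impI)
  show "Vec.subspace {act f x | f. L f}"
  proof (rule Vec.subspaceI)
    show "0 \<in> {act f x | f. L f}"
      using L act_zero_fun[of x] by (auto simp: left_ideal_def intro!: exI[of _ "\<lambda>c. 0"])
  next
    fix u v assume "u \<in> {act f x | f. L f}" "v \<in> {act f x | f. L f}"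
    then show "u + v \<in> {act f x | f. L f}"
      using L by (auto simp: left_ideal_def act_add_fun[symmetric])
  next
    fix a u assume "u \<in> {act f x | f. L f}"
    then show "vscale a u \<in> {act f x | f. L f}"
      using L by (auto simp: left_ideal_def act_scale_fun[symmetric])
  qed
  show "{act f x | f. L f} \<subseteq> W_vecs" using act_in_W_vecs by blast
  fix g v assume "lfun sc g" "v \<in> {act f x | f. L f}"
  then show "act g v \<in> {act f x | f. L f}"
    using L by (auto simp: left_ideal_def act_conv[symmetric])
qed

lemma left_ideal_annihilator: "left_ideal (\<lambda>f. lfun sc f \<and> (\<forall>y\<in>Y. act f y = 0))"
  by (auto simp: left_ideal_def lfun_zero_fun lfun_add_fun lfun_scale_fun lfun_conv
      act_zero_fun act_add_fun act_scale_fun act_conv act_zero)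

lemma left_ideal_augmentation: "left_ideal L \<Longrightarrow> left_ideal (\<lambda>f. L f \<and> f 1 = 0)"
  by (simp add: left_ideal_def conv_one)

text \<open>Writing \<open>\<epsilon> f = f 1\<close> for the counit of \<open>J\<close>: no element of \<open>L\<close> killing \<open>x\<close> lies outside
  \<open>ker \<epsilon>\<close>, so the submodule \<open>(L \<inter> ker \<epsilon>) x\<close> of the simple module \<open>V\<close> misses \<open>f\<^sub>0 x \<noteq> 0\<close>
  and therefore vanishes; this forces \<open>J\<close> to act on \<open>f\<^sub>0 x\<close> through \<open>\<epsilon>\<close>.\<close>
lemma simple_submodule_trivial_vector_step:
  assumes V: "simple_submodule V" and x: "x \<in> V" and L: "left_ideal L"
    and f0: "L f0" "f0 1 \<noteq> 0" and fails: "\<And>f. L f \<Longrightarrow> act f x = 0 \<Longrightarrow> f 1 = 0"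
  shows "\<exists>u\<in>V. u \<noteq> 0 \<and> (\<forall>g. lfun sc g \<longrightarrow> act g u = vscale (g 1) u)"
proof -
  have subV: "submodule V"
    and min: "\<And>U. submodule U \<Longrightarrow> U \<subseteq> V \<Longrightarrow> U \<noteq> {0} \<Longrightarrow> U = V"
    using V by (simp_all add: simple_submodule_def)
  have lfunL: "\<And>f. L f \<Longrightarrow> lfun sc f"
    and Ladd: "\<And>f g. L f \<Longrightarrow> L g \<Longrightarrow> L (\<lambda>c. f c + g c)"
    and Lscale: "\<And>a f. L f \<Longrightarrow> L (\<lambda>c. a * f c)"
    and Lconv: "\<And>h f. lfun sc h \<Longrightarrow> L f \<Longrightarrow> L (conv D h f)"
    using L by (simp_all add: left_ideal_def)
  have diff: "L (\<lambda>c. f c + (- 1) * g c)" if "L f" "L g" for f g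
    using that by (intro Ladd Lscale)
  have act_diff: "act (\<lambda>c. f c + (- 1) * g c) x = act f x - act g x" for f g
    by (simp only: act_add_fun act_scale_fun) (simp add: fun_eq_iff)
  define u where "u = act f0 x"
  have uV: "u \<in> V" unfolding u_def using subV x lfunL[OF f0(1)] by (simp add: submodule_def)
  have "u \<noteq> 0" using fails f0 by (auto simp: u_def)
  define K where "K = {act f x | f. L f \<and> f 1 = 0}"
  have "K = {0}"
  proof (rule ccontr)
    assume "K \<noteq> {0}"
    moreover have "submodule K" unfolding K_def using L by (intro submodule_orbit left_ideal_augmentation)
    moreover have "K \<subseteq> V" using subV x lfunL by (auto simp: K_def submodule_def)
    ultimately have "K = V" by (rule min[rotated 2])
    then have "u \<in> K" using uV by simp
    then obtain f where f: "L f" "f 1 = 0" "act f x = u" by (auto simp: K_def)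
    then have "act (\<lambda>c. f0 c + (- 1) * f c) x = 0" unfolding act_diff by (simp add: u_def)
    from fails[OF diff[OF f0(1) f(1)] this] have "f0 1 - f 1 = 0" by simp
    then show False using f(2) f0(2) by simp
  qed
  have "act g u = vscale (g 1) u" if g: "lfun sc g" for g
  proof -
    define h where "h = (\<lambda>c. conv D g f0 c + (- 1) * (g 1 * f0 c))"
    have "L h" unfolding h_def using f0(1) g by (intro Ladd Lscale Lconv)
    moreover have "h 1 = 0" using g lfunL[OF f0(1)] by (simp add: h_def conv_one)
    ultimately have "act h x = 0" using \<open>K = {0}\<close> by (auto simp: K_def)
    have "act h x = act (conv D g f0) x + vscale (- 1) (vscale (g 1) (act f0 x))"
      unfolding h_def by (simp only: act_add_fun act_scale_fun)
    also have "\<dots> = act g u - vscale (g 1) u"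
      using g lfunL[OF f0(1)] by (simp add: act_conv u_def fun_eq_iff)
    finally show ?thesis using \<open>act h x = 0\<close> by simp
  qed
  then show ?thesis using uV \<open>u \<noteq> 0\<close> by blast
qed

text \<open>Basis vectors of \<open>V\<close> are added to \<open>Y\<close> one at a time until the annihilator of \<open>Y\<close>
  falls into the kernel of the counit.\<close>
lemma simple_submodule_trivial_vector:
  assumes V: "simple_submodule V"
    and ann: "\<And>f. lfun sc f \<Longrightarrow> (\<forall>v\<in>V. act f v = 0) \<Longrightarrow> f 1 = 0"
  shows "\<exists>u\<in>V. u \<noteq> 0 \<and> (\<forall>g. lfun sc g \<longrightarrow> act g u = vscale (g 1) u)"
proof -
  obtain Bs where Bs: "Bs \<subseteq> V" "Vec.independent Bs" "V \<subseteq> Vec.span Bs"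
    by (rule Vec.basis_exists)
  obtain F where F: "finite F" "W_vecs \<subseteq> Vec.span F" using W_vecs_finite_span by blast
  have "V \<subseteq> W_vecs" using V by (simp add: simple_submodule_def submodule_def)
  then have "Bs \<subseteq> Vec.span F" using Bs(1) F(2) by blast
  with Vec.independent_span_bound[OF F(1) Bs(2)] have "finite Bs" by simp
  define P where "P Y \<longleftrightarrow> (\<exists>f. lfun sc f \<and> (\<forall>y\<in>Y. act f y = 0) \<and> f 1 \<noteq> 0)" for Y
  have "P {}" using lfun_counit counit_one by (auto simp: P_def)
  moreover have "\<not> P Bs"
  proof
    assume "P Bs"
    then obtain f where f: "lfun sc f" "\<forall>y\<in>Bs. act f y = 0" "f 1 \<noteq> 0" by (auto simp: P_def)
    have "Vec.subspace {v. act f v = 0}"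
      by (rule Vec.subspaceI) (auto simp: act_add act_vscale act_zero)
    then have "Vec.span Bs \<subseteq> {v. act f v = 0}" using f(2) by (intro Vec.span_minimal) auto
    then show False using ann[OF f(1)] f(3) Bs(3) by blast
  qed
  ultimately obtain Y x where x: "x \<in> Bs" and "P Y" and fails: "\<not> P (insert x Y)"
    using ex_subset_insert_fails[OF \<open>finite Bs\<close>] by blast
  then obtain f0 where "lfun sc f0" "\<forall>y\<in>Y. act f0 y = 0" "f0 1 \<noteq> 0" by (auto simp: P_def)
  then show ?thesis
    using x Bs(1) fails unfolding P_def
    by (intro simple_submodule_trivial_vector_step[OF V _ left_ideal_annihilator[of Y], of x f0])
      auto
qed

section \<open>Coefficient coalgebras\<close>

definition coeff :: "nat \<Rightarrow> (nat \<Rightarrow> 'k) \<Rightarrow> 'c" where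
  "coeff i v = (\<Sum>j<m. sc (v j) (cf i j))"

definition coeff_space :: "(nat \<Rightarrow> 'k) set \<Rightarrow> 'c set" where
  "coeff_space V = C.span {coeff i v | i v. i < m \<and> v \<in> V}"

lemma lfun_coeff: "lfun sc f \<Longrightarrow> i < m \<Longrightarrow> f (coeff i v) = act f v i"
  by (simp add: coeff_def act_def lfun_sum lfun_scale mult.commute[of "v _"])

lemma tev_comult_coeff:
  assumes f: "lfun sc f" and g: "lfun sc g" and i: "i < m"
  shows "tev f g (D (coeff i v)) = f (coeff i (act g v))"
proof -
  have "tev f g (D (coeff i v)) = (\<Sum>j<m. v j * (\<Sum>k<m. f (cf i k) * g (cf k j)))"
    unfolding coeff_def using i
    by (simp add: lfun_sum[OF lfun_tev_comult[OF f g]] lfun_scale[OF lfun_tev_comult[OF f g]]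
        tev_comult_cf f g)
  also have "\<dots> = (\<Sum>j<m. \<Sum>k<m. f (cf i k) * (g (cf k j) * v j))"
    by (simp add: sum_distrib_left mult.commute mult.left_commute)
  also have "\<dots> = (\<Sum>k<m. f (cf i k) * act g v k)"
    by (subst sum.swap) (simp add: act_def sum_distrib_left)
  also have "\<dots> = f (coeff i (act g v))"
    using i by (simp add: lfun_coeff f act_def)
  finally show ?thesis .
qed

lemma coeff_space_finite_span: "\<exists>F. finite F \<and> coeff_space V \<subseteq> C.span F"
proof (intro exI conjI)
  define F where "F = (\<lambda>(i, j). cf i j) ` ({..<m} \<times> {..<m})"
  show "finite F" by (simp add: F_def)
  have "coeff i v \<in> C.span F" if "i < m" for i v
    unfolding coeff_def
  proof (intro C.span_sum C.span_scale C.span_base)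
    fix j assume "j \<in> {..<m}"
    then show "cf i j \<in> F" using that unfolding F_def by (auto intro: rev_image_eqI[of "(i, j)"])
  qed
  then have "{coeff i v | i v. i < m \<and> v \<in> V} \<subseteq> C.span F" by blast
  then show "coeff_space V \<subseteq> C.span F"
    unfolding coeff_space_def by (rule C.span_minimal[OF _ C.subspace_span])
qed

lemma annihilator_vanishes_on_coeff_space:
  assumes f: "lfun sc f" and ann: "\<forall>v\<in>V. act f v = 0" and x: "x \<in> coeff_space V"
  shows "f x = 0"
  using f _ x[unfolded coeff_space_def]
proof (rule lfun_eq_0_on_span)
  fix y assume "y \<in> {coeff i v | i v. i < m \<and> v \<in> V}"
  then obtain i v where "y = coeff i v" "i < m" "v \<in> V" by blast
  then show "f y = 0" using ann by (simp add: lfun_coeff[OF f])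
qed

lemma coeff_space_subcoalg:
  assumes V: "submodule V"
  shows "subcoalg sc D (coeff_space V)"
  unfolding subcoalg_def
proof (intro conjI ballI allI impI)
  show "C.subspace (coeff_space V)" unfolding coeff_space_def by (rule C.subspace_span)
  fix d f g
  assume d: "d \<in> coeff_space V" and f: "lfun sc f" and g: "lfun sc g"
    and fB: "\<forall>x\<in>coeff_space V. f x = 0"
  have coeff_in: "coeff i v \<in> coeff_space V" if "i < m" "v \<in> V" for i v
    using that unfolding coeff_space_def by (blast intro: C.span_base)
  show "tev f g (D d) = 0"
    using lfun_tev_comult[OF f g] _ d unfolding coeff_space_def
  proof (rule lfun_eq_0_on_span[where f = "\<lambda>c. tev f g (D c)"])
    fix x assume "x \<in> {coeff i v | i v. i < m \<and> v \<in> V}"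
    then obtain i v where "x = coeff i v" "i < m" "v \<in> V" by blast
    moreover have "act g v \<in> V" using V g \<open>v \<in> V\<close> by (simp add: submodule_def)
    ultimately show "tev f g (D x) = 0" using fB coeff_in by (simp add: tev_comult_coeff[OF f g])
  qed
  show "tev g f (D d) = 0"
    using lfun_tev_comult[OF g f] _ d unfolding coeff_space_def
  proof (rule lfun_eq_0_on_span[where f = "\<lambda>c. tev g f (D c)"])
    fix x assume "x \<in> {coeff i v | i v. i < m \<and> v \<in> V}"
    then obtain i v where x: "x = coeff i v" "i < m" "v \<in> V" by blast
    have "act f v = 0"
    proof (rule ext)
      fix k show "act f v k = 0 k"
      proof (cases "k < m")
        case True
        then have "f (coeff k v) = 0" using fB coeff_in[OF True x(3)] by blast
        then show ?thesis using lfun_coeff[OF f True, of v] by simp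
      qed (simp add: act_def)
    qed
    moreover have "tev g f (D x) = g (coeff i (act f v))" using x by (simp add: tev_comult_coeff[OF g f])
    ultimately show "tev g f (D x) = 0" using lfun_zero[OF g] by (simp add: coeff_def)
  qed
qed

lemma coeff_space_nonzero:
  assumes V: "submodule V" "V \<noteq> {0}"
  shows "coeff_space V \<noteq> {0}"
proof -
  have "0 \<in> V" using V(1) by (simp add: submodule_def Vec.subspace_0)
  then obtain v where v: "v \<in> V" "v \<noteq> 0" using V(2) by blast
  have vW: "v \<in> W_vecs" using V(1) v(1) unfolding submodule_def by blast
  then obtain i where i: "i < m" "v i \<noteq> 0" using W_vecs_nonzero_coord v(2) by blast
  then have "e (coeff i v) = v i" by (simp add: lfun_coeff[OF lfun_counit] act_counit[OF vW])
  then have "coeff i v \<noteq> 0" using i(2) lfun_zero[OF lfun_counit] by auto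
  moreover have "coeff i v \<in> coeff_space V"
    unfolding coeff_space_def using v(1) i(1) by (intro C.span_base) blast
  ultimately show ?thesis by blast
qed

lemma ex_simple_subcoalg:
  assumes B: "subcoalg sc D B" "B \<noteq> {0}" and F: "finite F" "B \<subseteq> C.span F"
  shows "\<exists>B0\<subseteq>B. simple_subcoalg sc D B0"
proof -
  define Q where "Q E \<longleftrightarrow> subcoalg sc D E \<and> E \<subseteq> B \<and> E \<noteq> {0}" for E
  have "C.subspace E \<and> E \<subseteq> C.span F" if "Q E" for E
    using that F(2) unfolding Q_def subcoalg_def by blast
  moreover have "Q B" using B by (simp add: Q_def)
  ultimately obtain B0 where B0: "Q B0" and min: "\<And>E. Q E \<Longrightarrow> E \<subseteq> B0 \<Longrightarrow> E = B0"
    using C.ex_minimal_subspace[OF F(1), of Q B] by blast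
  have "simple_subcoalg sc D B0"
    unfolding simple_subcoalg_def
  proof (intro conjI allI impI)
    show "subcoalg sc D B0" "B0 \<noteq> {0}" using B0 by (simp_all add: Q_def)
    fix E assume "subcoalg sc D E" "E \<subseteq> B0"
    then show "E = {0} \<or> E = B0" using B0 min[of E] by (auto simp: Q_def)
  qed
  then show ?thesis using B0 by (auto simp: Q_def)
qed

lemma one_mem_subcoalg_if_coradical_trivial:
  assumes cor: "coradical sc D = range (\<lambda>a. sc a 1)"
    and B: "subcoalg sc D B" "B \<noteq> {0}" and F: "finite F" "B \<subseteq> C.span F"
  shows "1 \<in> B"
proof -
  obtain B0 where B0: "B0 \<subseteq> B" "simple_subcoalg sc D B0"
    using ex_simple_subcoalg[OF B F] by blast
  then have sub: "C.subspace B0" and "B0 \<noteq> {0}"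
    unfolding simple_subcoalg_def subcoalg_def by blast+
  moreover have "0 \<in> B0" using sub by (rule C.subspace_0)
  ultimately obtain d where d: "d \<in> B0" "d \<noteq> 0" by blast
  have "B0 \<subseteq> coradical sc D"
    unfolding coradical_def using B0(2) by (blast intro: C.span_base)
  then obtain a where a: "d = sc a 1" using d(1) cor by auto
  then have "a \<noteq> 0" using d(2) by auto
  have "sc (inverse a) d \<in> B0" using sub d(1) by (rule C.subspace_scale)
  then show "1 \<in> B" using B0(1) \<open>a \<noteq> 0\<close> by (auto simp: a)
qed

lemma trivial_vector_coinvariant:
  assumes u: "\<And>g. lfun sc g \<Longrightarrow> act g u = vscale (g 1) u"
  shows "coinvariant u"
  unfolding coinvariant_def
proof (intro allI impI)
  fix i assume i: "i < m"
  show "(\<Sum>j<m. sc (u j) (cf i j)) = sc (u i) 1"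
  proof (rule ccontr)
    assume "(\<Sum>j<m. sc (u j) (cf i j)) \<noteq> sc (u i) 1"
    then have "coeff i u - sc (u i) 1 \<noteq> 0" by (simp add: coeff_def)
    then obtain g where g: "lfun sc g" "g (coeff i u - sc (u i) 1) \<noteq> 0"
      using ex_lfun_nonzero[OF C.vector_space_axioms] by blast
    have "g (coeff i u - sc (u i) 1) = act g u i - u i * g 1"
      using g(1) i by (simp add: lfun_diff lfun_scale lfun_coeff)
    then show False using g u[OF g(1)] by (simp add: mult.commute)
  qed
qed

lemma coradical_trivial_imp_coinvariant:
  assumes cor: "coradical sc D = range (\<lambda>a. sc a 1)" and "m > 0"
  shows "\<exists>w. (\<exists>j<m. w j \<noteq> 0) \<and> coinvariant w"
proof -
  obtain V where V: "simple_submodule V" using ex_simple_submodule \<open>m > 0\<close> by blast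
  then have subV: "submodule V" and "V \<noteq> {0}" by (simp_all add: simple_submodule_def)
  obtain F where "finite F" "coeff_space V \<subseteq> C.span F"
    using coeff_space_finite_span by blast
  then have "1 \<in> coeff_space V"
    using coeff_space_subcoalg[OF subV] coeff_space_nonzero[OF subV \<open>V \<noteq> {0}\<close>]
    by (intro one_mem_subcoalg_if_coradical_trivial[OF cor])
  then have "f 1 = 0" if "lfun sc f" "\<forall>v\<in>V. act f v = 0" for f
    using that by (intro annihilator_vanishes_on_coeff_space)
  then obtain u where u: "u \<in> V" "u \<noteq> 0" "\<And>g. lfun sc g \<Longrightarrow> act g u = vscale (g 1) u"
    using simple_submodule_trivial_vector[OF V] by blast
  have "u \<in> W_vecs" using u(1) subV unfolding submodule_def by blast
  then have "\<exists>j<m. u j \<noteq> 0" using W_vecs_nonzero_coord u(2) by blast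
  then show ?thesis using trivial_vector_coinvariant u(3) by blast
qed

end

theorem proposition7p1:
  fixes sc :: "'k::field \<Rightarrow> 'c::comm_ring_1 \<Rightarrow> 'c"
    and D :: "'c \<Rightarrow> ('c \<times> 'c) list" and e :: "'c \<Rightarrow> 'k" and S :: "'c \<Rightarrow> 'c"
    and m :: nat and cf :: "nat \<Rightarrow> nat \<Rightarrow> 'c" and br :: "nat \<Rightarrow> nat \<Rightarrow> 'c \<Rightarrow> 'k"
  assumes char: "(2::'k) \<noteq> 0"
    and HC: "HC_pair sc D e S m cf br"
  shows "((\<exists>w :: nat \<Rightarrow> 'k. (\<exists>j<m. w j \<noteq> 0) \<and>
            (\<forall>i<m. (\<Sum>j<m. sc (w j) (cf i j)) = sc (w i) 1))
          \<longrightarrow> has_nonzero_odd_primitive sc D e m cf br) \<and>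
         (coradical sc D = range (\<lambda>a. sc a 1) \<and> m > 0
          \<longrightarrow> has_nonzero_odd_primitive sc D e m cf br)"
proof -
  interpret hopf_comodule sc D e S m cf
    using HC by unfold_locales (simp_all add: HC_pair_def)
  have br: "\<forall>i<m. \<forall>j<m. br i j \<in> prim_dual sc e"
    using HC by (simp add: HC_pair_def dual_HC_def)
  have from_coinvariant: "has_nonzero_odd_primitive sc D e m cf br"
    if "\<exists>w. (\<exists>j<m. w j \<noteq> 0) \<and> coinvariant w"
    using that coinvariant_imp_odd_primitive[OF br] by blast
  show ?thesis
  proof (intro conjI impI)
    show "has_nonzero_odd_primitive sc D e m cf br"
      if "\<exists>w :: nat \<Rightarrow> 'k. (\<exists>j<m. w j \<noteq> 0) \<and> (\<forall>i<m. (\<Sum>j<m. sc (w j) (cf i j)) = sc (w i) 1)"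
      using that by (intro from_coinvariant) (simp add: coinvariant_def)
    show "has_nonzero_odd_primitive sc D e m cf br"
      if "coradical sc D = range (\<lambda>a. sc a 1) \<and> m > 0"
      using that coradical_trivial_imp_coinvariant by (intro from_coinvariant) blast
  qed
qed

end
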